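(* Let $\lambda:\frac12\mathbb{N}\to\mathbb{C}$ and let $\sigma\in\Phi^0(SU_q(2))$ satisfy $\sum_{j=-l}^{l}\sigma_{i_0j}(l)=\lambda(l)$ for every $l\in\frac12\mathbb{N}$ and every $-l\le i_0\le l$. Then $\{\lambda(l)\}_{l\in\frac12\mathbb{N}}\subseteq\mathrm{spec}(T_\sigma)$, and the multiplicity of $\lambda(l)$ as an eigenvalue is at least $2l+1$.
   Context: Fix $0<q<1$. $SU_q(2)$ is the $*$-algebra generated by $a,c$ with $ac^*=qc^*a$, $ca^*=qa^*c$, $c^*a^*=qa^*c^*$, $c^*c=cc^*$, $aa^*+q^2c^*c=a^*a+c^*c=1$, with Haar state $h$. For $l\in\frac12\mathbb{N}$, $T^l=[t^l_{ij}]_{-l\le i,j\le l}$ is the irreducible unitary matrix corepresentation of dimension $2l+1$; $\{t^l_{ij}\}$ is an orthogonal basis with $h(t^l_{ij}(t^l_{ij})^* )=[2l+1]_q^{-1}q^{2j}$, $[x]_q=\frac{q^x-q^{-x}}{q-q^{-1}}$. Fourier transform: $\hat f(l)_{mn}=h(f(t^l_{nm})^* )$. $Tr_q(M)=Tr(D_qM)$, $D_q=\mathrm{diag}(q^{-2i})_{-l\le i\le l}$. A symbol is a map $\sigma:\frac12\mathbb{N}\to\bigcup_lM_{2l+1}(\mathbb{C})\otimes SU_q(2)$ (matrix entries $\sigma_{ij}(l)$, $-l\le i,j\le l$), with operator $T_\sigma f=\sum_l[2l+1]_qTr_q(\sigma(l)\hat f(l)T^l)$. With $I_{2l+1}=\{-l,\dots,l\}$: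 $\sigma$ is homogeneous of Fourier order $m\in\frac12\mathbb{N}$ if for each $l$ there is $\psi_\sigma(l):I_{2l+1}^2\to I_{2l+1}^2$ with $\sigma(l)_{ij}\in\mathrm{Span}\{t^m_{\psi_\sigma(l)(i,j)}\}$ and $\sigma(l)_{ij}=0$ when $\psi_\sigma(l)(i,j)\notin I_{2m+1}^2$; $\Phi^m(SU_q(2))$ consists of finite linear combinations of such symbols; in particular symbols in $\Phi^0$ have complex entries. *)

theory Defs
  imports Complex_Main
begin

(* Conventions.
   l \<in> 1/2 N is represented by N = 2l :: nat.
   Matrix indices i \<in> I_{2l+1} = {-l, -l+1, ..., l} are represented by the reals themselves.
   The quantum group algebra SU_q(2) is a complex *-algebra: carrier type 'a (a ring with 1),
   complex scalar multiplication smul, involution star, Haar state h, and the matrix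
   coefficients t N i j = t^l_{ij} of the irreducible corepresentations. *)

definition Idx :: "nat \<Rightarrow> real set" where
  "Idx N = (\<lambda>k. real k - real N / 2) ` {0..N}"

definition qnum :: "real \<Rightarrow> real \<Rightarrow> real" where
  "qnum q x = (q powr x - q powr (-x)) / (q - inverse q)"

definition SUq2_model ::
  "real \<Rightarrow> (complex \<Rightarrow> 'a::ring_1 \<Rightarrow> 'a) \<Rightarrow> ('a \<Rightarrow> 'a) \<Rightarrow> ('a \<Rightarrow> complex)
   \<Rightarrow> (nat \<Rightarrow> real \<Rightarrow> real \<Rightarrow> 'a) \<Rightarrow> bool" where
  "SUq2_model q smul star h t \<longleftrightarrow>
     0 < q \<and> q < 1 \<and>
     vector_space smul \<and>
     (\<forall>c x y. smul c (x * y) = smul c x * y \<and> smul c (x * y) = x * smul c y) \<and>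
     (\<forall>x y. star (x + y) = star x + star y) \<and>
     (\<forall>c x. star (smul c x) = smul (cnj c) (star x)) \<and>
     (\<forall>x y. star (x * y) = star y * star x) \<and>
     (\<forall>x. star (star x) = x) \<and>
     (\<forall>x y. h (x + y) = h x + h y) \<and>
     (\<forall>c x. h (smul c x) = c * h x) \<and>
     h 1 = 1 \<and>
     t 0 0 0 = 1 \<and>
     (\<forall>N i j N' i' j'. i \<in> Idx N \<longrightarrow> j \<in> Idx N \<longrightarrow> i' \<in> Idx N' \<longrightarrow> j' \<in> Idx N' \<longrightarrow>
        h (t N i j * star (t N' i' j')) =
          (if N = N' \<and> i = i' \<and> j = j'
           then complex_of_real (inverse (qnum q (real N + 1)) * q powr (2 * j)) else 0)) \<and>
     \<not> module.dependent smul {t N i j | N i j. i \<in> Idx N \<and> j \<in> Idx N} \<and>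
     module.span smul {t N i j | N i j. i \<in> Idx N \<and> j \<in> Idx N} = UNIV"

definition fhat :: "('a::ring_1 \<Rightarrow> 'a) \<Rightarrow> ('a \<Rightarrow> complex) \<Rightarrow> (nat \<Rightarrow> real \<Rightarrow> real \<Rightarrow> 'a)
   \<Rightarrow> 'a \<Rightarrow> nat \<Rightarrow> real \<Rightarrow> real \<Rightarrow> complex" where
  "fhat star h t f N m n = h (f * star (t N n m))"

(* A symbol: sigma N i j = \<sigma>_{ij}(l) for l = N/2, i,j \<in> I_{2l+1} (values elsewhere irrelevant). *)

definition homogeneous ::
  "(complex \<Rightarrow> 'a::ring_1 \<Rightarrow> 'a) \<Rightarrow> (nat \<Rightarrow> real \<Rightarrow> real \<Rightarrow> 'a) \<Rightarrow> nat
   \<Rightarrow> (nat \<Rightarrow> real \<Rightarrow> real \<Rightarrow> 'a) \<Rightarrow> bool" where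
  "homogeneous smul t M sigma \<longleftrightarrow>
     (\<forall>N. \<exists>\<psi> :: real \<times> real \<Rightarrow> real \<times> real.
        \<psi> ` (Idx N \<times> Idx N) \<subseteq> Idx N \<times> Idx N \<and>
        (\<forall>i\<in>Idx N. \<forall>j\<in>Idx N.
           sigma N i j \<in> module.span smul {t M (fst (\<psi> (i, j))) (snd (\<psi> (i, j)))} \<and>
           (\<psi> (i, j) \<notin> Idx M \<times> Idx M \<longrightarrow> sigma N i j = 0)))"

definition Phi ::
  "(complex \<Rightarrow> 'a::ring_1 \<Rightarrow> 'a) \<Rightarrow> (nat \<Rightarrow> real \<Rightarrow> real \<Rightarrow> 'a) \<Rightarrow> nat
   \<Rightarrow> (nat \<Rightarrow> real \<Rightarrow> real \<Rightarrow> 'a) \<Rightarrow> bool" where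
  "Phi smul t M sigma \<longleftrightarrow>
     (\<exists>(K::nat) (c :: nat \<Rightarrow> complex) (s :: nat \<Rightarrow> nat \<Rightarrow> real \<Rightarrow> real \<Rightarrow> 'a).
        (\<forall>k<K. homogeneous smul t M (s k)) \<and>
        (\<forall>N. \<forall>i\<in>Idx N. \<forall>j\<in>Idx N. sigma N i j = (\<Sum>k<K. smul (c k) (s k N i j))))"

(* T_sigma f = \<Sum>_l [2l+1]_q Tr_q(\<sigma>(l) \<hat>f(l) T^l),  Tr_q(M) = \<Sum>_i q^{-2i} M_ii.
   The sum over l is taken over the (finite, for f in SU_q(2)) set of l with \<hat>f(l) \<noteq> 0;
   the other terms vanish. *)
definition Tsym ::
  "real \<Rightarrow> (complex \<Rightarrow> 'a::ring_1 \<Rightarrow> 'a) \<Rightarrow> ('a \<Rightarrow> 'a) \<Rightarrow> ('a \<Rightarrow> complex)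
   \<Rightarrow> (nat \<Rightarrow> real \<Rightarrow> real \<Rightarrow> 'a) \<Rightarrow> (nat \<Rightarrow> real \<Rightarrow> real \<Rightarrow> 'a) \<Rightarrow> 'a \<Rightarrow> 'a" where
  "Tsym q smul star h t sigma f =
     (\<Sum>N\<in>{N. \<exists>m\<in>Idx N. \<exists>n\<in>Idx N. fhat star h t f N m n \<noteq> 0}.
        smul (complex_of_real (qnum q (real N + 1)))
          (\<Sum>i\<in>Idx N. smul (complex_of_real (q powr (- 2 * i)))
             (\<Sum>a\<in>Idx N. \<Sum>b\<in>Idx N. sigma N i a * smul (fhat star h t f N a b) (t N b i))))"

definition is_eigenvalue :: "(complex \<Rightarrow> 'a::ring_1 \<Rightarrow> 'a) \<Rightarrow> ('a \<Rightarrow> 'a) \<Rightarrow> complex \<Rightarrow> bool" where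
  "is_eigenvalue smul T \<mu> \<longleftrightarrow> (\<exists>f. f \<noteq> 0 \<and> T f = smul \<mu> f)"

definition eig_mult_ge :: "(complex \<Rightarrow> 'a::ring_1 \<Rightarrow> 'a) \<Rightarrow> ('a \<Rightarrow> 'a) \<Rightarrow> complex \<Rightarrow> nat \<Rightarrow> bool" where
  "eig_mult_ge smul T \<mu> k \<longleftrightarrow>
     (\<exists>S. finite S \<and> card S = k \<and> \<not> module.dependent smul S \<and> (\<forall>f\<in>S. T f = smul \<mu> f))"

end

theory Submission
  imports Defs
begin

text \<open>
  For fixed \<open>l\<close> and \<open>u \<in> I\<^sub>2\<^sub>l\<^sub>+\<^sub>1\<close> put \<open>f\<^sub>u = \<Sum>\<^sub>v q\<^sup>-\<^sup>2\<^sup>v t\<^sup>l\<^sub>u\<^sub>v\<close>. The weights \<open>q\<^sup>-\<^sup>2\<^sup>v\<close> cancel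
  the factors \<open>q\<^sup>2\<^sup>v\<close> of the orthogonality relations, so \<open>\<hat>f\<^sub>u\<close> is supported at \<open>l\<close> and
  \<open>\<hat>f\<^sub>u(l)\<^sub>a\<^sub>b = [2l+1]\<^sub>q\<^sup>-\<^sup>1 \<delta>\<^sub>b\<^sub>u\<close> for every row \<open>a\<close>. Hence in \<open>T\<^sub>\<sigma> f\<^sub>u\<close> the symbol
  only enters through its row sums \<open>\<Sum>\<^sub>a \<sigma>\<^sub>i\<^sub>a(l) = \<lambda>(l)\<close>, and \<open>T\<^sub>\<sigma> f\<^sub>u = \<lambda>(l) f\<^sub>u\<close>.
  The same orthogonality relations show that the \<open>2l+1\<close> vectors \<open>f\<^sub>u\<close> are
  linearly independent.
\<close>

lemma qnum_neq_0:
  assumes "0 < q" "q < 1" "0 < x"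
  shows "qnum q x \<noteq> 0"
proof -
  have "q powr x < 1" using powr_less_mono2[of x q 1] assms by simp
  moreover have "1 < q powr (- x)"
    using \<open>q powr x < 1\<close> assms by (simp add: powr_minus one_less_inverse)
  moreover have "q \<noteq> inverse q" using assms one_less_inverse[of q] by auto
  ultimately show ?thesis unfolding qnum_def by simp
qed

lemma finite_Idx: "finite (Idx N)"
  unfolding Idx_def by simp

lemma card_Idx: "card (Idx N) = N + 1"
proof -
  have "inj_on (\<lambda>k. real k - real N / 2) {0..N}" by (auto simp: inj_on_def)
  then show ?thesis unfolding Idx_def by (simp add: card_image)
qed

lemma Idx_nonempty: "Idx N \<noteq> {}"
  unfolding Idx_def by simp

lemma (in vector_space) independent_if_biorthogonal:
  assumes additive: "\<And>u x y. u \<in> U \<Longrightarrow> \<phi> u (x + y) = \<phi> u x + \<phi> u y"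
    and homogeneous: "\<And>u c x. u \<in> U \<Longrightarrow> \<phi> u (scale c x) = c * \<phi> u x"
    and biorth: "\<And>u v. u \<in> U \<Longrightarrow> v \<in> U \<Longrightarrow> (\<phi> u (f v) \<noteq> 0) = (u = v)"
  shows "inj_on f U" and "\<not> dependent (f ` U)"
proof -
  show "inj_on f U"
    by (rule inj_onI) (metis biorth)
  show "\<not> dependent (f ` U)"
  proof
    assume "dependent (f ` U)"
    then obtain T c v where T: "finite T" "T \<subseteq> f ` U"
      and sum0: "(\<Sum>x\<in>T. scale (c x) x) = 0" and v: "v \<in> T" "c v \<noteq> 0"
      unfolding dependent_explicit by blast
    obtain u where u: "u \<in> U" "v = f u" using T(2) v(1) by blast
    have \<phi>_0: "\<phi> u 0 = 0" using homogeneous[OF u(1), of 0 0] by simp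
    have \<phi>_sum: "\<phi> u (\<Sum>x\<in>S. g x) = (\<Sum>x\<in>S. \<phi> u (g x))" if "finite S" for S g
      using that by (induction S rule: finite_induct) (simp_all add: \<phi>_0 additive[OF u(1)])
    have "0 = \<phi> u (\<Sum>x\<in>T. scale (c x) x)"
      using sum0 \<phi>_0 by simp
    also have "\<dots> = (\<Sum>x\<in>T. c x * \<phi> u x)"
      by (simp add: \<phi>_sum[OF T(1)] homogeneous[OF u(1)])
    also have "\<dots> = c v * \<phi> u v + (\<Sum>x\<in>T - {v}. c x * \<phi> u x)"
      by (rule sum.remove[OF T(1) v(1)])
    also have "(\<Sum>x\<in>T - {v}. c x * \<phi> u x) = 0"
    proof (rule sum.neutral, rule ballI)
      fix x assume "x \<in> T - {v}"
      with T(2) u obtain w where "w \<in> U" "x = f w" "w \<noteq> u" by blast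
      then show "c x * \<phi> u x = 0" using biorth[OF u(1)] by auto
    qed
    finally show False using v(2) biorth[OF u(1) u(1)] u(2) by simp
  qed
qed

locale suq2 =
  fixes q :: real
    and smul :: "complex \<Rightarrow> 'a::ring_1 \<Rightarrow> 'a"
    and star :: "'a \<Rightarrow> 'a"
    and h :: "'a \<Rightarrow> complex"
    and t :: "nat \<Rightarrow> real \<Rightarrow> real \<Rightarrow> 'a"
  assumes model: "SUq2_model q smul star h t"
begin

lemma q_pos: "0 < q" and q_less_1: "q < 1"
  using model unfolding SUq2_model_def by simp_all

sublocale vector_space smul
  using model unfolding SUq2_model_def by simp

lemma smul_mult_left: "smul c x * y = smul c (x * y)"
  using model unfolding SUq2_model_def by simp

lemma haar_add: "h (x + y) = h x + h y"
  and haar_smul: "h (smul c x) = c * h x"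
  using model unfolding SUq2_model_def by simp_all

lemma haar_zero: "h 0 = 0"
  using haar_add[of 0 0] by simp

lemma haar_sum: "finite A \<Longrightarrow> h (\<Sum>x\<in>A. g x) = (\<Sum>x\<in>A. h (g x))"
  by (induction A rule: finite_induct) (simp_all add: haar_zero haar_add)

lemma haar_orthogonality:
  assumes "i \<in> Idx N" "j \<in> Idx N" "i' \<in> Idx N'" "j' \<in> Idx N'"
  shows "h (t N i j * star (t N' i' j')) =
    (if N = N' \<and> i = i' \<and> j = j'
     then complex_of_real (inverse (qnum q (real N + 1)) * q powr (2 * j)) else 0)"
  using model assms unfolding SUq2_model_def by blast

abbreviation qdim :: "nat \<Rightarrow> real" where
  "qdim N \<equiv> qnum q (real N + 1)"

lemma qdim_neq_0: "qdim N \<noteq> 0"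
  by (rule qnum_neq_0[OF q_pos q_less_1]) simp

definition weighted_row :: "nat \<Rightarrow> real \<Rightarrow> 'a" where
  "weighted_row N u = (\<Sum>v\<in>Idx N. smul (complex_of_real (q powr (- 2 * v))) (t N u v))"

lemma haar_weighted_row:
  assumes "u \<in> Idx N" "a \<in> Idx N'" "b \<in> Idx N'"
  shows "h (weighted_row N u * star (t N' b a)) =
    (if N' = N \<and> b = u then complex_of_real (inverse (qdim N)) else 0)"
proof -
  have "h (weighted_row N u * star (t N' b a)) =
      (\<Sum>v\<in>Idx N. complex_of_real (q powr (- 2 * v)) * h (t N u v * star (t N' b a)))"
    unfolding weighted_row_def
    by (simp add: sum_distrib_right smul_mult_left haar_sum finite_Idx haar_smul)
  also have "\<dots> = (\<Sum>v\<in>Idx N. if N' = N \<and> b = u \<and> v = a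
      then complex_of_real (q powr (- 2 * a) * (inverse (qdim N) * q powr (2 * a))) else 0)"
    using assms by (intro sum.cong refl) (auto simp: haar_orthogonality)
  also have "\<dots> = (if N' = N \<and> b = u then complex_of_real (inverse (qdim N)) else 0)"
  proof (cases "N' = N \<and> b = u")
    case True
    with assms(2) have "a \<in> Idx N" by simp
    moreover have "complex_of_real (q powr (- 2 * a)) * complex_of_real (q powr (2 * a)) = 1"
      using q_pos by (simp add: powr_add[symmetric] flip: of_real_mult)
    ultimately show ?thesis using True by (simp add: finite_Idx)
  next
    case False
    show ?thesis
      unfolding if_not_P[OF False] by (rule sum.neutral) (use False in auto)
  qed
  finally show ?thesis .
qed

lemma fhat_weighted_row:
  assumes "u \<in> Idx N" "a \<in> Idx N'" "b \<in> Idx N'"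
  shows "fhat star h t (weighted_row N u) N' a b =
    (if N' = N \<and> b = u then complex_of_real (inverse (qdim N)) else 0)"
  unfolding fhat_def using haar_weighted_row[OF assms] .

lemma fourier_support_weighted_row:
  assumes "u \<in> Idx N"
  shows "{N'. \<exists>a\<in>Idx N'. \<exists>b\<in>Idx N'. fhat star h t (weighted_row N u) N' a b \<noteq> 0} = {N}"
  using assms fhat_weighted_row[OF assms] qdim_neq_0 by auto

lemma Tsym_weighted_row:
  assumes u: "u \<in> Idx N"
    and row_sums: "\<And>i. i \<in> Idx N \<Longrightarrow> (\<Sum>j\<in>Idx N. sigma N i j) = smul \<mu> 1"
  shows "Tsym q smul star h t sigma (weighted_row N u) = smul \<mu> (weighted_row N u)"
proof -
  let ?c = "complex_of_real (inverse (qdim N))"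
  have fourier_term: "(\<Sum>a\<in>Idx N. \<Sum>b\<in>Idx N.
        sigma N i a * smul (fhat star h t (weighted_row N u) N a b) (t N b i))
      = smul (\<mu> * ?c) (t N u i)" if i: "i \<in> Idx N" for i
  proof -
    have "sigma N i a * smul (fhat star h t (weighted_row N u) N a b) (t N b i)
        = (if b = u then sigma N i a * smul ?c (t N u i) else 0)"
      if "a \<in> Idx N" "b \<in> Idx N" for a b
      using that u by (simp add: fhat_weighted_row)
    then have "(\<Sum>a\<in>Idx N. \<Sum>b\<in>Idx N.
          sigma N i a * smul (fhat star h t (weighted_row N u) N a b) (t N b i))
        = (\<Sum>a\<in>Idx N. sigma N i a * smul ?c (t N u i))"
      using u by (simp add: finite_Idx)
    also have "\<dots> = smul \<mu> 1 * smul ?c (t N u i)"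
      by (simp add: sum_distrib_right[symmetric] row_sums[OF i])
    also have "\<dots> = smul (\<mu> * ?c) (t N u i)"
      by (simp add: smul_mult_left)
    finally show ?thesis .
  qed
  have "Tsym q smul star h t sigma (weighted_row N u) = smul (complex_of_real (qdim N))
      (\<Sum>i\<in>Idx N. smul (complex_of_real (q powr (- 2 * i))) (smul (\<mu> * ?c) (t N u i)))"
    unfolding Tsym_def fourier_support_weighted_row[OF u] by (simp add: fourier_term)
  also have "\<dots> = smul (complex_of_real (qdim N) * (\<mu> * ?c)) (weighted_row N u)"
    unfolding weighted_row_def by (simp add: scale_sum_right ac_simps)
  also have "\<dots> = smul \<mu> (weighted_row N u)"
    using qdim_neq_0[of N] by (simp add: field_simps)
  finally show ?thesis .
qed

lemma weighted_rows_independent: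
  shows "inj_on (weighted_row N) (Idx N)" and "\<not> dependent (weighted_row N ` Idx N)"
proof -
  let ?\<phi> = "\<lambda>u x. h (x * star (t N u u))"
  have "\<And>u x y. ?\<phi> u (x + y) = ?\<phi> u x + ?\<phi> u y"
    and "\<And>u c x. ?\<phi> u (smul c x) = c * ?\<phi> u x"
    by (simp_all add: distrib_right haar_add smul_mult_left haar_smul)
  moreover have "(?\<phi> u (weighted_row N v) \<noteq> 0) = (u = v)" if "u \<in> Idx N" "v \<in> Idx N" for u v
    using that haar_weighted_row qdim_neq_0 by auto
  ultimately show "inj_on (weighted_row N) (Idx N)" "\<not> dependent (weighted_row N ` Idx N)"
    using independent_if_biorthogonal[of "Idx N" ?\<phi> "weighted_row N"] by blast+
qed

lemma weighted_row_neq_0: "u \<in> Idx N \<Longrightarrow> weighted_row N u \<noteq> 0"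
  by (metis dependent_zero imageI weighted_rows_independent(2))

end

theorem mainTheorem9:
  fixes q :: real
    and smul :: "complex \<Rightarrow> 'a::ring_1 \<Rightarrow> 'a"
    and star :: "'a \<Rightarrow> 'a"
    and h :: "'a \<Rightarrow> complex"
    and t :: "nat \<Rightarrow> real \<Rightarrow> real \<Rightarrow> 'a"
    and lam :: "nat \<Rightarrow> complex"
    and sigma :: "nat \<Rightarrow> real \<Rightarrow> real \<Rightarrow> 'a"
  assumes "SUq2_model q smul star h t"
    and "Phi smul t 0 sigma"
    and "\<forall>N. \<forall>i0\<in>Idx N. (\<Sum>j\<in>Idx N. sigma N i0 j) = smul (lam N) 1"
  shows "\<forall>N. is_eigenvalue smul (Tsym q smul star h t sigma) (lam N)
            \<and> eig_mult_ge smul (Tsym q smul star h t sigma) (lam N) (N + 1)"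
proof
  fix N
  interpret suq2 q smul star h t by (rule suq2.intro) (rule assms(1))
  have eigen: "Tsym q smul star h t sigma (weighted_row N u) = smul (lam N) (weighted_row N u)"
    if "u \<in> Idx N" for u
    by (rule Tsym_weighted_row[OF that]) (use assms(3) in blast)
  obtain u where "u \<in> Idx N" using Idx_nonempty by blast
  then have "is_eigenvalue smul (Tsym q smul star h t sigma) (lam N)"
    unfolding is_eigenvalue_def using eigen weighted_row_neq_0 by blast
  moreover have "eig_mult_ge smul (Tsym q smul star h t sigma) (lam N) (N + 1)"
    unfolding eig_mult_ge_def
  proof (intro exI conjI)
    show "finite (weighted_row N ` Idx N)" by (simp add: finite_Idx)
    show "card (weighted_row N ` Idx N) = N + 1"
      using card_image[OF weighted_rows_independent(1)] card_Idx by simp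
    show "\<not> dependent (weighted_row N ` Idx N)" by (rule weighted_rows_independent(2))
    show "\<forall>f\<in>weighted_row N ` Idx N. Tsym q smul star h t sigma f = smul (lam N) f"
      using eigen by blast
  qed
  ultimately show "is_eigenvalue smul (Tsym q smul star h t sigma) (lam N)
      \<and> eig_mult_ge smul (Tsym q smul star h t sigma) (lam N) (N + 1)" ..
qed

end
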